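(* Let $n\ge3$. For a non-degenerate $n$-gon $Z=(z_1,\dots,z_n)$ put $a_i=[z_i-z_{i-1},z_{i+1}-z_i]$, and for $k=1,\dots,n$ let $W_k=(w_{1k},\dots,w_{nk})$ be the tangent vector at $Z$ with $w_{ik}=0$ for $i\notin\{k,k+1\}$, $w_{k,k}=a_{k+1}(z_k-z_{k-1})$ and $w_{k+1,k}=a_k(z_{k+2}-z_{k+1})$. Then at every $Z\in U_n$ the vectors $W_1,\dots,W_n$ are linearly independent and span the fiber $F(Z)$ of the dual Birkhoff distribution.
   Context: $[\cdot,\cdot]$ is the determinant of two plane vectors; indices are cyclic. $G_n$ is the set of $n$-gons in $\mathbb R^2$ with $z_i\ne z_{i+1}$ for all $i$; $U_n\subset G_n$ is the open set of non-degenerate $n$-gons (no three consecutive vertices collinear). The dual Birkhoff distribution $\mathcal F$ on $G_n$: a tangent vector $W=(w_1,\dots,w_n)$ (velocities of the vertices) lies in $\mathcal F$ iff for each $i$ the induced motion of the line $z_iz_{i+1}$ is an infinitesimal rotation about the midpoint of $z_iz_{i+1}$; equivalently $[w_i+w_{i+1},z_{i+1}-z_i]=0$ for all $i$. $F(Z)$ denotes the fiber of $\mathcal F$ at $Z$. *)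

theory Defs
  imports "HOL-Analysis.Analysis"
begin

text \<open>Plane vectors are real^2; polygons and tangent vectors are maps nat => real^2,
  vertices indexed 0..n-1, indices taken cyclically (mod n).\<close>

definition det2 :: "real^2 \<Rightarrow> real^2 \<Rightarrow> real" where
  "det2 u v = u$1 * v$2 - u$2 * v$1"

definition vtx :: "nat \<Rightarrow> (nat \<Rightarrow> real^2) \<Rightarrow> int \<Rightarrow> real^2" where
  "vtx n Z i = Z (nat (i mod int n))"

definition in_G :: "nat \<Rightarrow> (nat \<Rightarrow> real^2) \<Rightarrow> bool" where
  "in_G n Z \<longleftrightarrow> (\<forall>i<n. vtx n Z (int i) \<noteq> vtx n Z (int i + 1))"

definition in_U :: "nat \<Rightarrow> (nat \<Rightarrow> real^2) \<Rightarrow> bool" where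
  "in_U n Z \<longleftrightarrow> in_G n Z \<and>
     (\<forall>i<n. det2 (vtx n Z (int i) - vtx n Z (int i - 1)) (vtx n Z (int i + 1) - vtx n Z (int i)) \<noteq> 0)"

definition tangent_vec :: "nat \<Rightarrow> (nat \<Rightarrow> real^2) \<Rightarrow> bool" where
  "tangent_vec n w \<longleftrightarrow> (\<forall>i\<ge>n. w i = 0)"

definition birkhoff_fiber :: "nat \<Rightarrow> (nat \<Rightarrow> real^2) \<Rightarrow> (nat \<Rightarrow> real^2) set" where
  "birkhoff_fiber n Z = {w. tangent_vec n w \<and>
     (\<forall>i<n. det2 (vtx n w (int i) + vtx n w (int i + 1)) (vtx n Z (int i + 1) - vtx n Z (int i)) = 0)}"

definition a_coef :: "nat \<Rightarrow> (nat \<Rightarrow> real^2) \<Rightarrow> int \<Rightarrow> real" where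
  "a_coef n Z i = det2 (vtx n Z i - vtx n Z (i - 1)) (vtx n Z (i + 1) - vtx n Z i)"

definition W_vec :: "nat \<Rightarrow> (nat \<Rightarrow> real^2) \<Rightarrow> nat \<Rightarrow> nat \<Rightarrow> real^2" where
  "W_vec n Z k i =
     (if i = k then a_coef n Z (int k + 1) *\<^sub>R (vtx n Z (int k) - vtx n Z (int k - 1))
      else if i = (k + 1) mod n then a_coef n Z (int k) *\<^sub>R (vtx n Z (int k + 2) - vtx n Z (int k + 1))
      else 0)"

end

theory Submission
  imports Defs
begin

text \<open>Write S for the combination of the W_k with coefficients c_k and [.,.] for det2. Only W_i
  and W_(i-1) contribute at the vertex i, so S_i = c_i a_(i+1) (z_i - z_(i-1)) + c_(i-1) a_(i-1) (z_(i+1) - z_i)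
  and the brackets of S_i with the outgoing and the incoming edge at z_i are c_i a_i a_(i+1) and
  -c_(i-1) a_(i-1) a_i. These cancel in the Birkhoff condition of every edge, so S lies in F(Z).
  On a non-degenerate polygon all a_i are nonzero, so S = 0 forces c = 0; and as the two edges at
  a vertex form a basis, a vector is determined by its brackets with them, so every w in F(Z) is
  the combination with c_i = [w_i, z_(i+1) - z_i] / (a_i a_(i+1)).\<close>

lemma det2_add_left [simp]: "det2 (x + y) w = det2 x w + det2 y w"
  by (simp add: det2_def algebra_simps)

lemma det2_diff_left: "det2 (x - y) w = det2 x w - det2 y w"
  by (simp add: det2_def algebra_simps)

lemma det2_scaleR_left [simp]: "det2 (r *\<^sub>R x) w = r * det2 x w"
  by (simp add: det2_def algebra_simps)

lemma det2_zero_left [simp]: "det2 0 w = 0"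
  by (simp add: det2_def)

lemma det2_self [simp]: "det2 x x = 0"
  by (simp add: det2_def)

lemma det2_anticommute: "det2 x y = - det2 y x"
  by (simp add: det2_def)

lemma eq_if_det2_eq:
  assumes "det2 u v \<noteq> 0" and "det2 x u = det2 y u" and "det2 x v = det2 y v"
  shows "x = y"
proof -
  define d where "d = x - y"
  have "det2 d u = 0" "det2 d v = 0"
    using assms(2,3) by (simp_all add: d_def det2_diff_left)
  then have "d$1 * det2 u v = 0" "d$2 * det2 u v = 0"
    unfolding det2_def by algebra+
  then have "d = 0"
    using assms(1) by (simp add: vec_eq_iff forall_2)
  then show ?thesis
    by (simp add: d_def)
qed

lemma vtx_mod [simp]: "vtx n Z (i mod int n) = vtx n Z i"
  by (simp add: vtx_def)

lemma vtx_mod_add [simp]: "vtx n Z (i mod int n + d) = vtx n Z (i + d)"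
  by (simp add: vtx_def mod_add_left_eq)

lemma vtx_mod_diff [simp]: "vtx n Z (i mod int n - d) = vtx n Z (i - d)"
  by (simp add: vtx_def mod_diff_left_eq)

lemma vtx_of_nat: "i < n \<Longrightarrow> vtx n Z (int i) = Z i"
  by (simp add: vtx_def)

lemma a_coef_mod [simp]: "a_coef n Z (i mod int n) = a_coef n Z i"
  by (simp add: a_coef_def)

lemma a_coef_mod_add [simp]: "a_coef n Z (i mod int n + d) = a_coef n Z (i + d)"
  by (metis a_coef_mod mod_add_left_eq)

lemma a_coef_nonzero:
  assumes "n > 0" and "in_U n Z"
  shows "a_coef n Z i \<noteq> 0"
proof -
  have "nat (i mod int n) < n"
    using assms(1) by (simp add: nat_less_iff)
  then have "a_coef n Z (int (nat (i mod int n))) \<noteq> 0"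
    using assms(2) unfolding in_U_def a_coef_def by blast
  then show ?thesis
    using assms(1) by simp
qed

lemma birkhoff_fiber_iff:
  assumes "n > 0"
  shows "w \<in> birkhoff_fiber n Z \<longleftrightarrow> tangent_vec n w \<and>
    (\<forall>i. det2 (vtx n w i + vtx n w (i + 1)) (vtx n Z (i + 1) - vtx n Z i) = 0)"
proof -
  have "det2 (vtx n w i + vtx n w (i + 1)) (vtx n Z (i + 1) - vtx n Z i) = 0"
    if "\<forall>k<n. det2 (vtx n w (int k) + vtx n w (int k + 1)) (vtx n Z (int k + 1) - vtx n Z (int k)) = 0"
    for i
  proof -
    have "nat (i mod int n) < n" "int (nat (i mod int n)) = i mod int n"
      using assms by (simp_all add: nat_less_iff)
    then show ?thesis
      using that by (metis vtx_mod vtx_mod_add)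
  qed
  then show ?thesis
    unfolding birkhoff_fiber_def by blast
qed

definition W_combination :: "nat \<Rightarrow> (nat \<Rightarrow> real^2) \<Rightarrow> (nat \<Rightarrow> real) \<Rightarrow> nat \<Rightarrow> real^2" where
  "W_combination n Z c = (\<lambda>i. \<Sum>k<n. c k *\<^sub>R W_vec n Z k i)"

lemma W_combination_outside:
  assumes "n \<le> i"
  shows "W_combination n Z c i = 0"
proof -
  have "W_vec n Z k i = 0" if "k < n" for k
  proof -
    have "(k + 1) mod n < n"
      using that by simp
    then have "i \<noteq> k" "i \<noteq> (k + 1) mod n"
      using that assms by linarith+
    then show ?thesis
      unfolding W_vec_def by simp
  qed
  then show ?thesis
    by (simp add: W_combination_def)
qed

lemma add_1_mod_neq:
  fixes m n :: nat
  assumes "n \<ge> 2" and "m < n"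
  shows "(m + 1) mod n \<noteq> m"
proof (cases "m + 1 = n")
  case True
  then show ?thesis
    using assms(1) by simp
next
  case False
  then show ?thesis
    using assms(2) by simp
qed

lemma W_combination_of_nat:
  assumes "n \<ge> 2" and "m < n" and "p < n" and "(p + 1) mod n = m"
  shows "W_combination n Z c m = c m *\<^sub>R W_vec n Z m m + c p *\<^sub>R W_vec n Z p m"
proof -
  have succ: "(k + 1) mod n = (if k + 1 = n then 0 else k + 1)" if "k < n" for k
    using that by auto
  have "p \<noteq> m"
    using add_1_mod_neq assms by blast
  have "(\<Sum>k<n. c k *\<^sub>R W_vec n Z k m) = (\<Sum>k\<in>{m, p}. c k *\<^sub>R W_vec n Z k m)"
  proof (rule sum.mono_neutral_right)
    show "\<forall>k\<in>{..<n} - {m, p}. c k *\<^sub>R W_vec n Z k m = 0"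
    proof
      fix k
      assume k: "k \<in> {..<n} - {m, p}"
      then have "(k + 1) mod n \<noteq> m"
        using assms succ[of k] succ[of p] by (auto split: if_splits)
      then show "c k *\<^sub>R W_vec n Z k m = 0"
        using k by (auto simp: W_vec_def)
    qed
  qed (use assms in auto)
  then show ?thesis
    using \<open>p \<noteq> m\<close> by (simp add: W_combination_def)
qed

lemma vtx_W_combination:
  assumes "n \<ge> 2"
  shows "vtx n (W_combination n Z c) i =
    (c (nat (i mod int n)) * a_coef n Z (i + 1)) *\<^sub>R (vtx n Z i - vtx n Z (i - 1))
    + (c (nat ((i - 1) mod int n)) * a_coef n Z (i - 1)) *\<^sub>R (vtx n Z (i + 1) - vtx n Z i)"
proof -
  define m where "m = nat (i mod int n)"
  define p where "p = nat ((i - 1) mod int n)"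
  have m: "m < n" "int m = i mod int n"
    using assms by (simp_all add: m_def nat_less_iff)
  have p: "p < n" "int p = (i - 1) mod int n"
    using assms by (simp_all add: p_def nat_less_iff)
  have "int ((p + 1) mod n) = (int p + 1) mod int n"
    by (simp add: zmod_int add.commute)
  also have "\<dots> = int m"
    using m(2) p(2) by (simp add: mod_add_left_eq)
  finally have pm: "(p + 1) mod n = m"
    by simp
  then have "p \<noteq> m"
    using add_1_mod_neq[OF assms p(1)] by blast
  have "W_vec n Z m m = a_coef n Z (i + 1) *\<^sub>R (vtx n Z i - vtx n Z (i - 1))"
    using m(2) by (simp add: W_vec_def mod_diff_left_eq[symmetric])
  moreover have "W_vec n Z p m = a_coef n Z (i - 1) *\<^sub>R (vtx n Z (i + 1) - vtx n Z i)"
    using \<open>p \<noteq> m\<close> pm p(2) vtx_mod_add[of n Z "i - 1" 2] vtx_mod_add[of n Z "i - 1" 1]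
    by (simp add: W_vec_def add.commute)
  moreover have "vtx n (W_combination n Z c) i = W_combination n Z c m"
    by (simp add: vtx_def m_def)
  ultimately show ?thesis
    using W_combination_of_nat[OF assms m(1) p(1) pm] by (simp add: m_def p_def)
qed

lemma det2_W_combination_out_edge:
  assumes "n \<ge> 2"
  shows "det2 (vtx n (W_combination n Z c) i) (vtx n Z (i + 1) - vtx n Z i) =
    c (nat (i mod int n)) * a_coef n Z i * a_coef n Z (i + 1)"
  using vtx_W_combination[OF assms] by (simp add: a_coef_def[symmetric])

lemma det2_W_combination_in_edge:
  assumes "n \<ge> 2"
  shows "det2 (vtx n (W_combination n Z c) i) (vtx n Z i - vtx n Z (i - 1)) =
    - c (nat ((i - 1) mod int n)) * a_coef n Z (i - 1) * a_coef n Z i"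
  using vtx_W_combination[OF assms]
    det2_anticommute[of "vtx n Z (i + 1) - vtx n Z i" "vtx n Z i - vtx n Z (i - 1)"]
  by (simp add: a_coef_def[symmetric])

lemma W_combination_in_birkhoff_fiber:
  assumes "n \<ge> 2"
  shows "W_combination n Z c \<in> birkhoff_fiber n Z"
proof -
  have "tangent_vec n (W_combination n Z c)"
    by (simp add: tangent_vec_def W_combination_outside)
  moreover have "det2 (vtx n (W_combination n Z c) i + vtx n (W_combination n Z c) (i + 1))
      (vtx n Z (i + 1) - vtx n Z i) = 0" for i
    using det2_W_combination_out_edge[OF assms, of Z c i]
      det2_W_combination_in_edge[OF assms, of Z c "i + 1"]
    by simp
  ultimately show ?thesis
    using assms by (simp add: birkhoff_fiber_iff)
qed

lemma W_combination_eq_0_imp_coeffs_eq_0: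
  assumes "n \<ge> 2" and "in_U n Z" and "\<forall>i<n. W_combination n Z c i = 0" and "k < n"
  shows "c k = 0"
proof -
  have "vtx n (W_combination n Z c) (int k) = 0"
    using assms(3,4) by (simp add: vtx_of_nat)
  then have "c k * a_coef n Z (int k) * a_coef n Z (int k + 1) = 0"
    using det2_W_combination_out_edge[OF assms(1), of Z c "int k"] assms(4) by simp
  then show ?thesis
    using a_coef_nonzero[OF _ assms(2)] assms(1) by simp
qed

lemma birkhoff_fiber_subset_range_W_combination:
  assumes "n \<ge> 2" and "in_U n Z"
  shows "birkhoff_fiber n Z \<subseteq> range (W_combination n Z)"
proof
  fix w
  assume w: "w \<in> birkhoff_fiber n Z"
  let ?z = "vtx n Z" and ?a = "a_coef n Z"
  have n: "n > 0"
    using assms(1) by simp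
  have a_nonzero: "?a j \<noteq> 0" for j
    using a_coef_nonzero[OF n assms(2)] .
  define C where "C j = det2 (vtx n w j) (?z (j + 1) - ?z j) / (?a j * ?a (j + 1))" for j
  define c where "c k = C (int k)" for k
  have c_cyclic: "c (nat (j mod int n)) = C j" for j
    using n by (simp add: c_def C_def)
  have "w i = W_combination n Z c i" for i
  proof (cases "i < n")
    case False
    then show ?thesis
      using w by (simp add: birkhoff_fiber_def tangent_vec_def W_combination_outside)
  next
    case True
    let ?j = "int i"
    let ?u = "?z ?j - ?z (?j - 1)" and ?v = "?z (?j + 1) - ?z ?j"
    have w_i: "vtx n w ?j = w i" and S_i: "vtx n (W_combination n Z c) ?j = W_combination n Z c i"
      using True by (simp_all add: vtx_of_nat)
    have "det2 (vtx n w (?j - 1) + vtx n w ?j) ?u = 0"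
      using w n by (simp add: birkhoff_fiber_iff) (metis diff_add_cancel)
    then have "det2 (w i) ?u = det2 (W_combination n Z c i) ?u"
      using det2_W_combination_in_edge[OF assms(1), of Z c ?j] w_i S_i a_nonzero[of ?j]
        a_nonzero[of "?j - 1"]
      by (simp add: c_cyclic C_def)
    moreover have "det2 (w i) ?v = det2 (W_combination n Z c i) ?v"
      using det2_W_combination_out_edge[OF assms(1), of Z c ?j] w_i S_i a_nonzero[of ?j]
        a_nonzero[of "?j + 1"]
      by (simp add: c_cyclic C_def)
    moreover have "det2 ?u ?v \<noteq> 0"
      using a_nonzero[of ?j] by (simp add: a_coef_def)
    ultimately show ?thesis
      using eq_if_det2_eq by blast
  qed
  then show "w \<in> range (W_combination n Z)"
    by blast
qed

theorem lemma2p4: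
  fixes n :: nat and Z :: "nat \<Rightarrow> real^2"
  assumes "n \<ge> 3" and "in_U n Z"
  shows "(\<forall>c :: nat \<Rightarrow> real. (\<forall>i<n. (\<Sum>k<n. c k *\<^sub>R W_vec n Z k i) = 0) \<longrightarrow> (\<forall>k<n. c k = 0))
       \<and> birkhoff_fiber n Z = {w. \<exists>c :: nat \<Rightarrow> real. w = (\<lambda>i. \<Sum>k<n. c k *\<^sub>R W_vec n Z k i)}"
proof -
  have n: "n \<ge> 2"
    using assms(1) by simp
  have "birkhoff_fiber n Z = range (W_combination n Z)"
    using birkhoff_fiber_subset_range_W_combination[OF n assms(2)]
      W_combination_in_birkhoff_fiber[OF n] by blast
  moreover have "\<forall>k<n. c k = 0" if "\<forall>i<n. W_combination n Z c i = 0" for c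
    using W_combination_eq_0_imp_coeffs_eq_0[OF n assms(2) that] by blast
  ultimately show ?thesis
    unfolding W_combination_def by auto
qed

end
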